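(* With $W=\mathrm{inv}(\pi)$ and $W^\ast=\mathrm{inv}(\pi^\ast)$ as constructed in the context, \[\mathrm{Var}\bigl(\mathbb{E}(W^\ast-W\mid\pi)\bigr)\le\frac{Cn^5}{\bigl(n^2-\sum_a n_a^2\bigr)^2}\] for an absolute constant $C$ (independent of $h$, $n$ and the $n_a$). Here $\mathbb{E}(\cdot\mid\pi)$ averages over the auxiliary randomness $I,J,i^\ast,j^\ast$.
   Context: Let $h\ge 2$, let $n_1,\dots,n_h$ be positive integers, $n=n_1+\dots+n_h\ge 4$, and let $\pi$ be a uniformly distributed permutation of the multiset $\{1^{n_1},\dots,h^{n_h}\}$ (a sequence $(\pi(1),\dots,\pi(n))$ in which each $a$ occurs $n_a$ times, all such sequences equally likely). $\mathrm{inv}(\pi)$ is the number of pairs $i<j$ with $\pi(i)>\pi(j)$. Construction of $\pi^\ast$: Let $I$ be uniformly distributed over pairs $(i,j)$ with $1\le i<j\le n$; let $J=(a,b)$, for $h\ge a>b\ge 1$, with probability $n_an_b/\sum_{c<d}n_cn_d$; $\pi,I,J$ are independent. If $I=(i,j)$ and $\pi(i)>\pi(j)$, set $\pi^\ast=\pi$. If $I=(i,j)$, $\pi(i)\le\pi(j)$ and $J=(a,b)$: choose $i^\ast$ uniformly from $\{k:\pi(k)=a\}$ and $j^\ast$ uniformly from $\{k:\pi(k)=b\}$, independently of each other and of all else. Then: (1) if $\{i,j\}\cap\{i^\ast,j^\ast\}=\emptyset$, or $i=i^\ast,j\ne j^\ast$, or $i\ne i^\ast,j=j^\ast$, obtain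 $\pi^\ast$ from $\pi$ by exchanging the entries at positions $i$ and $i^\ast$ and exchanging the entries at positions $j$ and $j^\ast$; (2) if $i=j^\ast$ and $j=i^\ast$, obtain $\pi^\ast$ by exchanging the entries at positions $i$ and $j$; (3) if $i=j^\ast$, $j\ne i^\ast$, set $\pi^\ast(i)=\pi(i^\ast)$, $\pi^\ast(j)=\pi(i)$, $\pi^\ast(i^\ast)=\pi(j)$, and $\pi^\ast(k)=\pi(k)$ for $k\notin\{i,j,i^\ast\}$; (4) if $i\ne j^\ast$, $j=i^\ast$, set $\pi^\ast(i)=\pi(j)$, $\pi^\ast(j)=\pi(j^\ast)$, $\pi^\ast(j^\ast)=\pi(i)$, and $\pi^\ast(k)=\pi(k)$ for $k\notin\{i,j,j^\ast\}$. *)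

theory Defs
  imports Complex_Main
begin

text \<open>Permutations of the multiset with colours 1..h, colour a occurring cnt a times,
  represented as lists (positions 0-indexed).\<close>
definition msperms :: "nat \<Rightarrow> (nat \<Rightarrow> nat) \<Rightarrow> nat list set" where
  "msperms h cnt = {xs. length xs = (\<Sum>a=1..h. cnt a) \<and> set xs \<subseteq> {1..h} \<and>
      (\<forall>a\<in>{1..h}. count_list xs a = cnt a)}"

definition inv_count :: "nat list \<Rightarrow> nat" where
  "inv_count xs = card {(i,j). i < j \<and> j < length xs \<and> xs!i > xs!j}"

text \<open>The switched sequence, for given positions i<j (with xs!i <= xs!j) and chosen
  positions is (value a) and js (value b), following cases (1)--(4).\<close>
definition pi_star :: "nat list \<Rightarrow> nat \<Rightarrow> nat \<Rightarrow> nat \<Rightarrow> nat \<Rightarrow> nat list" where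
  "pi_star xs i j is js =
     (if i = js \<and> j = is then xs[i := xs!j, j := xs!i]
      else if i = js \<and> j \<noteq> is then xs[i := xs!is, j := xs!i, is := xs!j]
      else if i \<noteq> js \<and> j = is then xs[i := xs!j, j := xs!js, js := xs!i]
      else (let ys = xs[i := xs!is, is := xs!i] in ys[j := ys!js, js := ys!j]))"

text \<open>E(W* - W | pi): average over I, J, i*, j*.\<close>
definition cond_drift :: "nat \<Rightarrow> (nat \<Rightarrow> nat) \<Rightarrow> nat list \<Rightarrow> real" where
  "cond_drift h cnt xs =
    (let n = length xs;
         PI = {(i,j). i < j \<and> j < n};
         PJ = {(a,b). 1 \<le> b \<and> b < a \<and> a \<le> h};
         S = (\<Sum>(a,b)\<in>PJ. real (cnt a * cnt b))
     in (\<Sum>(i,j)\<in>PI. (1 / real (card PI)) *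
           (if xs!i > xs!j then 0
            else (\<Sum>(a,b)\<in>PJ. (real (cnt a * cnt b) / S) *
                    (\<Sum>is\<in>{k. k < n \<and> xs!k = a}. \<Sum>js\<in>{k. k < n \<and> xs!k = b}.
                       (1 / real (cnt a * cnt b)) *
                       (real (inv_count (pi_star xs i j is js)) - real (inv_count xs)))))))"

definition expect_perm :: "nat \<Rightarrow> (nat \<Rightarrow> nat) \<Rightarrow> (nat list \<Rightarrow> real) \<Rightarrow> real" where
  "expect_perm h cnt f = (\<Sum>xs\<in>msperms h cnt. f xs) / real (card (msperms h cnt))"

definition var_perm :: "nat \<Rightarrow> (nat \<Rightarrow> nat) \<Rightarrow> (nat list \<Rightarrow> real) \<Rightarrow> real" where
  "var_perm h cnt f = expect_perm h cnt (\<lambda>xs. (f xs - expect_perm h cnt f)^2)"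

end

theory Submission
  imports Defs "HOL-Combinatorics.Multiset_Permutations"
begin

text \<open>
  Up to the factor \<open>1/(N S)\<close>, where \<open>N = n(n-1)/2\<close> counts the pairs \<open>I\<close> and \<open>S\<close> is
  the sum of \<open>n\<^sub>a n\<^sub>b\<close> over \<open>a > b\<close>, the conditional drift \<open>E(W\<^sup>* - W | \<pi>)\<close> is a sum over
  \<open>I\<close> and over the position pairs \<open>(i\<^sup>*, j\<^sup>*)\<close> carrying a larger and a smaller colour of
  the change of the inversion count under the local rearrangement \<open>\<pi>\<^sup>*\<close>.
  Inversions only see the entries they involve, so transposing two entries of \<open>\<pi>\<close> changes
  each term whose four positions avoid the transposed ones by at most 72, and each of the
  \<open>O(n(N + S))\<close> remaining terms by \<open>O(n)\<close>: the drift has bounded differences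
  \<open>L = O(n\<^sup>2/S)\<close> under transpositions.  For a uniform permutation of a multiset such
  differences give \<open>Var \<le> n L\<^sup>2\<close> (condition on the first entry: the conditional means differ
  by at most \<open>L\<close> by a swap coupling, and induct on the length), and
  \<open>n\<^sup>2 - \<Sum>\<^sub>a n\<^sub>a\<^sup>2 = 2 S\<close>.
\<close>

definition list_swap :: "'a list \<Rightarrow> nat \<Rightarrow> nat \<Rightarrow> 'a list" where
  "list_swap xs p q = xs[p := xs!q, q := xs!p]"

lemma length_list_swap [simp]: "length (list_swap xs p q) = length xs"
  by (simp add: list_swap_def)

lemma nth_list_swap:
  "p < length xs \<Longrightarrow> q < length xs \<Longrightarrow>
   list_swap xs p q ! m = (if m = q then xs!p else if m = p then xs!q else xs!m)"
  by (auto simp: list_swap_def nth_list_update)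

lemma nth_list_swap_other: "m \<noteq> p \<Longrightarrow> m \<noteq> q \<Longrightarrow> list_swap xs p q ! m = xs ! m"
  by (simp add: list_swap_def)

lemma mset_list_swap: "p < length xs \<Longrightarrow> q < length xs \<Longrightarrow> mset (list_swap xs p q) = mset xs"
  unfolding list_swap_def by (rule mset_swap)

lemma list_swap_Cons: "list_swap (v # xs) (Suc p) (Suc q) = v # list_swap xs p q"
  by (simp add: list_swap_def)

lemma list_swap_list_swap:
  "p < length xs \<Longrightarrow> q < length xs \<Longrightarrow> list_swap (list_swap xs p q) p q = xs"
  by (rule nth_equalityI) (auto simp: nth_list_swap)

lemma list_swap_list_update:
  "m \<noteq> p \<Longrightarrow> m \<noteq> q \<Longrightarrow> (list_swap xs p q)[m := v] = list_swap (xs[m := v]) p q"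
  by (simp add: list_swap_def list_update_swap)

lemma list_swap_in_permutations_of_multiset:
  "xs \<in> permutations_of_multiset M \<Longrightarrow> p < length xs \<Longrightarrow> q < length xs \<Longrightarrow>
   list_swap xs p q \<in> permutations_of_multiset M"
  by (simp add: permutations_of_multiset_def mset_list_swap)

definition positions :: "'a list \<Rightarrow> 'a \<Rightarrow> nat set" where
  "positions xs u = {m. m < length xs \<and> xs!m = u}"

lemma finite_positions [simp]: "finite (positions xs u)"
  by (simp add: positions_def)

lemma card_positions: "card (positions xs u) = count_list xs u"
  by (simp add: positions_def length_filter_conv_card count_list_eq_length_filter eq_commute)

definition avg :: "('a \<Rightarrow> real) \<Rightarrow> 'a set \<Rightarrow> real" where
  "avg f A = sum f A / card A"

lemma abs_sum_le_card_mult: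
  fixes g :: "'a \<Rightarrow> real" and c :: real
  assumes "\<And>x. x \<in> A \<Longrightarrow> \<bar>g x\<bar> \<le> c"
  shows "\<bar>sum g A\<bar> \<le> real (card A) * c"
  using order_trans[OF sum_abs sum_bounded_above[of A "\<lambda>x. \<bar>g x\<bar>" c]] assms by blast

lemma sum_power2_diff_avg_split:
  fixes g :: "'a \<Rightarrow> real"
  assumes "finite A"
  shows "(\<Sum>x\<in>A. (g x - d)^2) = (\<Sum>x\<in>A. (g x - avg g A)^2) + card A * (avg g A - d)^2"
proof (cases "A = {}")
  case False
  define c where "c = avg g A"
  have "(\<Sum>x\<in>A. g x - c) = 0"
    using False assms by (simp add: sum_subtractf c_def avg_def)
  moreover have "(\<Sum>x\<in>A. (g x - d)^2) = (\<Sum>x\<in>A. (g x - c)^2 + 2 * (c - d) * (g x - c) + (c - d)^2)"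
    by (rule sum.cong) (auto simp: power2_eq_square algebra_simps)
  then have "(\<Sum>x\<in>A. (g x - d)^2)
      = (\<Sum>x\<in>A. (g x - c)^2) + 2 * (c - d) * (\<Sum>x\<in>A. g x - c) + card A * (c - d)^2"
    by (simp add: sum.distrib sum_distrib_left)
  ultimately show ?thesis by (simp add: c_def)
qed simp

lemma sum_group_by_key:
  assumes "finite A"
  shows "sum g A = (\<Sum>u\<in>key ` A. sum g {x \<in> A. key x = u})"
  using sum.group[of A "key ` A" key g] assms by simp

lemma card_group_by_key:
  assumes "finite A"
  shows "card A = (\<Sum>u\<in>key ` A. card {x \<in> A. key x = u})"
  using sum_group_by_key[OF assms, of "\<lambda>_. 1::nat" key] by simp

lemma sum_power2_diff_avg_group_by_key:
  fixes f :: "'a \<Rightarrow> real"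
  assumes "finite A"
  shows "(\<Sum>x\<in>A. (f x - avg f A)^2) = (\<Sum>u\<in>key ` A.
      (\<Sum>x\<in>{x \<in> A. key x = u}. (f x - avg f {x \<in> A. key x = u})^2)
      + card {x \<in> A. key x = u} * (avg f {x \<in> A. key x = u} - avg f A)^2)"
  unfolding sum_group_by_key[OF assms, of _ key] using assms
  by (intro sum.cong refl sum_power2_diff_avg_split) simp

lemma abs_avg_class_diff_avg_le:
  fixes f :: "'a \<Rightarrow> real"
  assumes fin: "finite A" and v: "v \<in> key ` A"
    and close: "\<And>u. u \<in> key ` A \<Longrightarrow>
      \<bar>avg f {x \<in> A. key x = v} - avg f {x \<in> A. key x = u}\<bar> \<le> L"
  shows "\<bar>avg f {x \<in> A. key x = v} - avg f A\<bar> \<le> L"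
proof -
  let ?C = "\<lambda>u. {x \<in> A. key x = u}"
  have card_C: "real (card (?C u)) > 0" if "u \<in> key ` A" for u
    using that fin by (auto simp: card_gt_0_iff)
  have card_A: "real (card A) = (\<Sum>u\<in>key ` A. real (card (?C u)))"
    using card_group_by_key[OF fin, of key] by simp
  have A_pos: "real (card A) > 0" using v fin by (auto simp: card_gt_0_iff)
  have "card A * avg f A = sum f A" using A_pos by (simp add: avg_def)
  also have "\<dots> = (\<Sum>u\<in>key ` A. card (?C u) * avg f (?C u))"
    using card_C unfolding sum_group_by_key[OF fin, of f key] avg_def
    by (intro sum.cong) auto
  finally have "card A * avg f A = (\<Sum>u\<in>key ` A. card (?C u) * avg f (?C u))" .
  moreover have "card A * avg f (?C v) = (\<Sum>u\<in>key ` A. card (?C u) * avg f (?C v))"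
    by (simp add: card_A sum_distrib_right)
  ultimately have "card A * (avg f (?C v) - avg f A)
      = (\<Sum>u\<in>key ` A. card (?C u) * (avg f (?C v) - avg f (?C u)))"
    by (simp add: right_diff_distrib sum_subtractf)
  also have "\<bar>\<dots>\<bar> \<le> (\<Sum>u\<in>key ` A. card (?C u) * L)"
    using close by (intro order_trans[OF sum_abs] sum_mono) (simp add: abs_mult mult_left_mono)
  also have "\<dots> = card A * L" using card_A by (simp add: sum_distrib_right)
  finally show ?thesis using A_pos by (simp add: abs_mult)
qed

definition perms_with_head :: "'a multiset \<Rightarrow> 'a \<Rightarrow> 'a list set" where
  "perms_with_head M u = {xs \<in> permutations_of_multiset M. xs!0 = u}"

lemma finite_perms_with_head [simp]: "finite (perms_with_head M u)"
  by (simp add: perms_with_head_def)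

lemma perms_with_head_eq:
  assumes "u \<in># M"
  shows "perms_with_head M u = (#) u ` permutations_of_multiset (M - {#u#})"
proof (intro set_eqI iffI)
  fix xs assume xs: "xs \<in> perms_with_head M u"
  then obtain y ys where "xs = y # ys"
    using assms by (cases xs) (auto simp: perms_with_head_def permutations_of_multiset_def)
  then show "xs \<in> (#) u ` permutations_of_multiset (M - {#u#})"
    using xs by (auto simp: perms_with_head_def permutations_of_multiset_Cons_iff)
qed (use assms in \<open>auto simp: perms_with_head_def permutations_of_multiset_Cons_iff\<close>)

lemma sum_perms_with_head:
  assumes "u \<in># M"
  shows "sum g (perms_with_head M u) = (\<Sum>ys\<in>permutations_of_multiset (M - {#u#}). g (u # ys))"
  by (simp add: perms_with_head_eq[OF assms] sum.reindex inj_on_def)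

lemma card_perms_with_head:
  assumes "u \<in># M"
  shows "card (perms_with_head M u) = card (permutations_of_multiset (M - {#u#}))"
  by (simp add: perms_with_head_eq[OF assms] card_image inj_on_def)

lemma card_perms_with_head_pos: "u \<in># M \<Longrightarrow> card (perms_with_head M u) > 0"
  by (simp add: perms_with_head_eq card_gt_0_iff)

lemma heads_permutations_of_multiset:
  assumes "M \<noteq> {#}"
  shows "(\<lambda>xs. xs!0) ` permutations_of_multiset M = set_mset M"
proof
  show "(\<lambda>xs. xs!0) ` permutations_of_multiset M \<subseteq> set_mset M"
  proof
    fix u assume "u \<in> (\<lambda>xs. xs!0) ` permutations_of_multiset M"
    then obtain xs where xs: "xs \<in> permutations_of_multiset M" "u = xs!0" by blast
    then have "xs \<noteq> []" using assms by (auto simp: permutations_of_multiset_def)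
    then have "u \<in> set xs" using xs(2) by simp
    then show "u \<in># M" using permutations_of_multisetD[OF xs(1)] by auto
  qed
  show "set_mset M \<subseteq> (\<lambda>xs. xs!0) ` permutations_of_multiset M"
    using card_perms_with_head_pos by (fastforce simp: perms_with_head_def card_gt_0_iff)
qed

lemma sum_Sigma_perms_with_head_positions:
  "(\<Sum>(xs,m)\<in>Sigma (perms_with_head M u) (\<lambda>xs. positions xs u'). g xs)
     = count M u' * sum (g :: 'a list \<Rightarrow> real) (perms_with_head M u)"
proof -
  have "(\<Sum>(xs,m)\<in>Sigma (perms_with_head M u) (\<lambda>xs. positions xs u'). g xs)
      = (\<Sum>xs\<in>perms_with_head M u. card (positions xs u') * g xs)"
    by (subst sum.Sigma[symmetric]) auto
  also have "\<dots> = (\<Sum>xs\<in>perms_with_head M u. count M u' * g xs)"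
    by (intro sum.cong refl)
       (auto simp: card_positions perms_with_head_def permutations_of_multiset_def simp flip: count_mset)
  finally show ?thesis by (simp add: sum_distrib_left)
qed

lemma bij_betw_swap_head:
  assumes "v \<noteq> w"
  shows "bij_betw (\<lambda>(xs, m). (list_swap xs 0 m, m))
    (Sigma (perms_with_head M v) (\<lambda>xs. positions xs w))
    (Sigma (perms_with_head M w) (\<lambda>xs. positions xs v))"
proof -
  let ?sw = "\<lambda>(xs, m). (list_swap xs 0 m, (m::nat))"
  have maps: "?sw t \<in> Sigma (perms_with_head M u') (\<lambda>xs. positions xs u) \<and> ?sw (?sw t) = t"
    if t_in: "t \<in> Sigma (perms_with_head M u) (\<lambda>xs. positions xs u')" and "u \<noteq> u'" for t u u'
  proof -
    obtain xs m where t: "t = (xs, m)" "xs \<in> permutations_of_multiset M" "xs!0 = u"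
      "m < length xs" "xs!m = u'"
      using t_in by (auto simp: perms_with_head_def positions_def)
    moreover have "0 < length xs" using t(4) by linarith
    ultimately show ?thesis
      using \<open>u \<noteq> u'\<close>
      by (auto simp: perms_with_head_def positions_def nth_list_swap list_swap_list_swap
          intro!: list_swap_in_permutations_of_multiset gr0I)
  qed
  show ?thesis
    by (rule bij_betwI[where g = ?sw]) (use maps assms in auto)
qed

lemma avg_perms_with_head_diff_le:
  fixes f :: "'a list \<Rightarrow> real"
  assumes L: "\<And>xs p q. xs \<in> permutations_of_multiset M \<Longrightarrow> p < size M \<Longrightarrow> q < size M \<Longrightarrow>
      \<bar>f (list_swap xs p q) - f xs\<bar> \<le> L"
    and v: "v \<in># M" and w: "w \<in># M" and vw: "v \<noteq> w"
  shows "\<bar>avg f (perms_with_head M w) - avg f (perms_with_head M v)\<bar> \<le> L"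
proof -
  let ?A = "perms_with_head M"
  define R where "R = Sigma (?A v) (\<lambda>xs. positions xs w)"
  have sum_R_swap: "(\<Sum>(xs,m)\<in>R. g (list_swap xs 0 m)) = count M v * sum g (?A w)"
    for g :: "'a list \<Rightarrow> real"
    using sum.reindex_bij_betw[OF bij_betw_swap_head[OF vw], of "\<lambda>(xs, m). g xs"]
      sum_Sigma_perms_with_head_positions[where M = M and u = w and u' = v and g = g]
    by (simp add: R_def case_prod_unfold)
  have sum_R: "(\<Sum>(xs,m)\<in>R. g xs) = count M w * sum g (?A v)" for g :: "'a list \<Rightarrow> real"
    unfolding R_def by (rule sum_Sigma_perms_with_head_positions)
  have card_R: "real (card R) = count M w * card (?A v)" "real (card R) = count M v * card (?A w)"
    using sum_R[of "\<lambda>_. 1"] sum_R_swap[of "\<lambda>_. 1"] by (simp_all add: case_prod_unfold)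
  have R_pos: "real (card R) > 0"
    using card_R v w card_perms_with_head_pos[OF v] by simp
  have "count M v * sum f (?A w) = card R * avg f (?A w)"
    using card_R(2) card_perms_with_head_pos[OF w] by (simp add: avg_def)
  moreover have "count M w * sum f (?A v) = card R * avg f (?A v)"
    using card_R(1) card_perms_with_head_pos[OF v] by (simp add: avg_def)
  ultimately have "card R * (avg f (?A w) - avg f (?A v)) = (\<Sum>(xs,m)\<in>R. f (list_swap xs 0 m) - f xs)"
    using sum_R_swap[of f] sum_R[of f]
    by (simp add: sum_subtractf case_prod_unfold right_diff_distrib)
  also have "\<bar>\<dots>\<bar> \<le> card R * L"
  proof (intro abs_sum_le_card_mult)
    fix t assume "t \<in> R"
    then show "\<bar>(case t of (xs, m) \<Rightarrow> f (list_swap xs 0 m) - f xs)\<bar> \<le> L"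
      by (auto simp: R_def perms_with_head_def positions_def length_finite_permutations_of_multiset
          intro!: L)
  qed
  finally show ?thesis using R_pos by (simp add: abs_mult)
qed

lemma sum_power2_diff_avg_le_permutations_of_multiset:
  fixes f :: "'a list \<Rightarrow> real" and L :: real
  assumes "\<And>xs p q. xs \<in> permutations_of_multiset M \<Longrightarrow> p < size M \<Longrightarrow> q < size M \<Longrightarrow>
      \<bar>f (list_swap xs p q) - f xs\<bar> \<le> L"
  shows "(\<Sum>xs\<in>permutations_of_multiset M. (f xs - avg f (permutations_of_multiset M))^2)
          \<le> real (card (permutations_of_multiset M)) * real (size M) * L^2"
  using assms
proof (induction "size M" arbitrary: M f)
  case 0
  then show ?case by (simp add: avg_def)
next
  case (Suc n M f)
  let ?P = "permutations_of_multiset M"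
  let ?A = "perms_with_head M"
  have A_eq: "?A u = {xs \<in> ?P. xs!0 = u}" for u by (simp add: perms_with_head_def)
  have heads: "(\<lambda>xs. xs!0) ` ?P = set_mset M"
    using Suc.hyps(2) by (intro heads_permutations_of_multiset) auto
  have L_nonneg: "0 \<le> L"
  proof -
    obtain xs where "xs \<in> ?P" using permutations_of_multiset_not_empty by blast
    then show ?thesis using Suc.prems[of xs 0 0] Suc.hyps(2) by simp
  qed
  have within: "(\<Sum>xs\<in>?A u. (f xs - avg f (?A u))^2) \<le> real (card (?A u)) * real n * L^2"
    if u: "u \<in># M" for u
  proof -
    have size_rest: "size (M - {#u#}) = n" using Suc.hyps(2) u by (simp add: size_Diff_submset)
    let ?Q = "permutations_of_multiset (M - {#u#})"
    have "(\<Sum>ys\<in>?Q. (f (u # ys) - avg (\<lambda>ys. f (u # ys)) ?Q)^2)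
        \<le> real (card ?Q) * real (size (M - {#u#})) * L^2"
    proof (rule Suc.hyps(1)[OF size_rest[symmetric]])
      fix ys p q assume "ys \<in> ?Q" "p < size (M - {#u#})" "q < size (M - {#u#})"
      then show "\<bar>f (u # list_swap ys p q) - f (u # ys)\<bar> \<le> L"
        using Suc.prems[of "u # ys" "Suc p" "Suc q"] u size_rest Suc.hyps(2)
        by (simp add: list_swap_Cons permutations_of_multiset_Cons_iff)
    qed
    moreover have "avg f (?A u) = avg (\<lambda>ys. f (u # ys)) ?Q"
      using u by (simp add: avg_def sum_perms_with_head card_perms_with_head)
    ultimately show ?thesis
      using u by (simp add: size_rest sum_perms_with_head[OF u] card_perms_with_head[OF u])
  qed
  have between: "(avg f (?A u) - avg f ?P)^2 \<le> L^2" if u: "u \<in># M" for u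
  proof -
    have "\<bar>avg f (?A u) - avg f (?A u')\<bar> \<le> L" if u': "u' \<in># M" for u'
      by (cases "u = u'")
         (use L_nonneg avg_perms_with_head_diff_le[OF Suc.prems u u'] in \<open>auto simp: abs_minus_commute\<close>)
    then have "\<bar>avg f (?A u) - avg f ?P\<bar> \<le> L"
      unfolding A_eq using heads u by (intro abs_avg_class_diff_avg_le) auto
    then show ?thesis by (metis abs_ge_zero power2_abs power_mono)
  qed
  have "(\<Sum>xs\<in>?P. (f xs - avg f ?P)^2)
      = (\<Sum>u\<in>set_mset M. (\<Sum>xs\<in>?A u. (f xs - avg f (?A u))^2) + card (?A u) * (avg f (?A u) - avg f ?P)^2)"
    using sum_power2_diff_avg_group_by_key[of ?P f "\<lambda>xs. xs!0"] by (simp add: heads A_eq)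
  also have "\<dots> \<le> (\<Sum>u\<in>set_mset M. real (card (?A u)) * real n * L^2 + card (?A u) * L^2)"
    using within between by (intro sum_mono add_mono mult_left_mono) auto
  also have "\<dots> = real (card ?P) * real (Suc n) * L^2"
  proof -
    have card_P: "real (card ?P) = (\<Sum>u\<in>set_mset M. real (card (?A u)))"
      using card_group_by_key[of ?P "\<lambda>xs. xs!0"] by (simp add: heads A_eq)
    show ?thesis
      unfolding card_P sum_distrib_right by (intro sum.cong) (auto simp: algebra_simps)
  qed
  finally show ?case using Suc.hyps(2) by simp
qed

lemma avg_power2_diff_avg_le_permutations_of_multiset:
  fixes f :: "'a list \<Rightarrow> real" and L :: real
  assumes "\<And>xs p q. xs \<in> permutations_of_multiset M \<Longrightarrow> p < size M \<Longrightarrow> q < size M \<Longrightarrow>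
      \<bar>f (list_swap xs p q) - f xs\<bar> \<le> L"
  shows "avg (\<lambda>xs. (f xs - avg f (permutations_of_multiset M))^2) (permutations_of_multiset M)
          \<le> real (size M) * L^2"
proof -
  have "real (card (permutations_of_multiset M)) > 0" by (simp add: card_gt_0_iff)
  then show ?thesis
    using sum_power2_diff_avg_le_permutations_of_multiset[OF assms]
    by (simp add: avg_def divide_le_eq mult.commute mult.left_commute)
qed

definition index_pairs :: "nat \<Rightarrow> (nat \<times> nat) set" where
  "index_pairs n = {(i,j). i < j \<and> j < n}"

lemma index_pairs_subset: "index_pairs n \<subseteq> {..<n} \<times> {..<n}"
  by (auto simp: index_pairs_def)

lemma finite_index_pairs [simp]: "finite (index_pairs n)"
  using finite_subset[OF index_pairs_subset] by blast

lemma card_index_pairs: "2 * card (index_pairs n) = n * (n - 1)"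
proof (induction n)
  case 0
  then show ?case by (simp add: index_pairs_def)
next
  case (Suc n)
  have "index_pairs (Suc n) = index_pairs n \<union> (\<lambda>i. (i, n)) ` {..<n}"
    by (auto simp: index_pairs_def)
  moreover have "index_pairs n \<inter> (\<lambda>i. (i, n)) ` {..<n} = {}"
    by (auto simp: index_pairs_def)
  ultimately have "card (index_pairs (Suc n)) = card (index_pairs n) + n"
    by (simp add: card_Un_disjoint card_image inj_on_def)
  then show ?case using Suc by (cases n) (auto simp: algebra_simps)
qed

definition inversion_indicator :: "nat list \<Rightarrow> nat \<times> nat \<Rightarrow> real" where
  "inversion_indicator xs st = (if xs ! snd st < xs ! fst st then 1 else 0)"

lemma inv_count_eq_sum:
  "real (inv_count xs) = (\<Sum>st\<in>index_pairs (length xs). inversion_indicator xs st)"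
proof -
  have "{(i,j). i < j \<and> j < length xs \<and> xs!i > xs!j}
      = {st \<in> index_pairs (length xs). xs ! snd st < xs ! fst st}"
    by (auto simp: index_pairs_def)
  then show ?thesis
    by (simp add: inv_count_def inversion_indicator_def sum.If_cases Int_def)
qed

lemma abs_sum_le_card_support:
  fixes g :: "'a \<Rightarrow> real" and c :: real
  assumes "finite A" and "\<And>x. x \<in> A \<Longrightarrow> x \<notin> B \<Longrightarrow> g x = 0" and "\<And>x. x \<in> A \<Longrightarrow> \<bar>g x\<bar> \<le> c"
  shows "\<bar>sum g A\<bar> \<le> real (card (A \<inter> B)) * c"
proof -
  have "sum g A = sum g (A \<inter> B)"
    by (rule sum.mono_neutral_right) (use assms in auto)
  then show ?thesis using abs_sum_le_card_mult[of "A \<inter> B" g c] assms(3) by simp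
qed

lemma card_pairs_meeting_le:
  assumes "A \<subseteq> {..<n} \<times> {..<n}" and "finite Q"
  shows "card (A \<inter> {(s,t). s \<in> Q \<or> t \<in> Q}) \<le> 2 * card Q * n"
proof -
  have "card (A \<inter> {(s,t). s \<in> Q \<or> t \<in> Q}) \<le> card ((Q \<times> {..<n}) \<union> ({..<n} \<times> Q))"
    using assms by (intro card_mono) auto
  also have "\<dots> \<le> card (Q \<times> {..<n}) + card ({..<n} \<times> Q)" by (rule card_Un_le)
  also have "\<dots> = 2 * card Q * n" by (simp add: card_cartesian_product)
  finally show ?thesis .
qed

lemma inv_count_diff_le:
  assumes "length ys = length xs" and "finite Q" and "\<And>m. m \<notin> Q \<Longrightarrow> ys!m = xs!m"
  shows "\<bar>real (inv_count ys) - real (inv_count xs)\<bar> \<le> 2 * card Q * length xs"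
proof -
  let ?n = "length xs"
  have "\<bar>real (inv_count ys) - real (inv_count xs)\<bar>
      = \<bar>\<Sum>st\<in>index_pairs ?n. inversion_indicator ys st - inversion_indicator xs st\<bar>"
    by (simp add: inv_count_eq_sum assms(1) sum_subtractf)
  also have "\<dots> \<le> real (card (index_pairs ?n \<inter> {(s,t). s \<in> Q \<or> t \<in> Q})) * 1"
    by (rule abs_sum_le_card_support) (auto simp: inversion_indicator_def assms(3))
  also have "\<dots> \<le> real (2 * card Q * ?n)"
    unfolding mult_1_right of_nat_le_iff by (rule card_pairs_meeting_le[OF index_pairs_subset assms(2)])
  finally show ?thesis by simp
qed

text \<open>Only pairs with both ends in \<open>Q \<union> {p, q}\<close> see both the modification on \<open>Q\<close>
  and the swap, so the effect of the swap changes by at most twice their number.\<close>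
lemma inv_count_swap_diff_diff_le:
  assumes len: "length ys = length xs" and "finite Q" and eq: "\<And>m. m \<notin> Q \<Longrightarrow> ys!m = xs!m"
    and p: "p < length xs" "p \<notin> Q" and q: "q < length xs" "q \<notin> Q"
  shows "\<bar>(real (inv_count (list_swap ys p q)) - real (inv_count ys))
           - (real (inv_count (list_swap xs p q)) - real (inv_count xs))\<bar> \<le> 2 * (card Q + 2)^2"
proof -
  let ?n = "length xs"
  let ?Q = "Q \<union> {p,q}"
  let ?ind = inversion_indicator
  let ?g = "\<lambda>st. (?ind (list_swap ys p q) st - ?ind ys st) - (?ind (list_swap xs p q) st - ?ind xs st)"
  have "\<bar>(real (inv_count (list_swap ys p q)) - real (inv_count ys))
           - (real (inv_count (list_swap xs p q)) - real (inv_count xs))\<bar>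
      = \<bar>\<Sum>st\<in>index_pairs ?n. ?g st\<bar>"
    by (simp add: inv_count_eq_sum len sum_subtractf)
  also have "\<dots> \<le> real (card (index_pairs ?n \<inter> (?Q \<times> ?Q))) * 2"
  proof (rule abs_sum_le_card_support)
    fix st assume st: "st \<in> index_pairs ?n" "st \<notin> ?Q \<times> ?Q"
    obtain s t where st': "st = (s,t)" "s < ?n" "t < ?n" using st(1) by (auto simp: index_pairs_def)
    show "?g st = 0"
    proof (cases "s \<notin> Q \<and> t \<notin> Q")
      case True
      then show ?thesis using st' p q len eq by (simp add: inversion_indicator_def nth_list_swap)
    next
      case False
      then have "s \<notin> {p,q} \<and> t \<notin> {p,q}" using st st' p q by auto
      then show ?thesis using st' p q len by (simp add: inversion_indicator_def nth_list_swap)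
    qed
  qed (auto simp: inversion_indicator_def)
  also have "\<dots> \<le> 2 * (card Q + 2)^2"
  proof -
    have "card {p,q} \<le> 2" by (simp add: card_insert_if)
    then have card_Q: "card ?Q \<le> card Q + 2" using card_Un_le[of Q "{p,q}"] by linarith
    have "card (index_pairs ?n \<inter> (?Q \<times> ?Q)) \<le> card (?Q \<times> ?Q)"
      using assms(2) by (intro card_mono) auto
    also have "\<dots> \<le> (card Q + 2)^2"
      unfolding card_cartesian_product power2_eq_square using mult_le_mono[OF card_Q card_Q] .
    finally have "real (card (index_pairs ?n \<inter> (?Q \<times> ?Q))) \<le> real ((card Q + 2)^2)"
      by (rule of_nat_mono)
    then show ?thesis by simp
  qed
  finally show ?thesis .
qed

lemma length_pi_star [simp]: "length (pi_star xs i j k l) = length xs"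
  by (simp add: pi_star_def Let_def)

lemma nth_pi_star_other: "m \<notin> {i,j,k,l} \<Longrightarrow> pi_star xs i j k l ! m = xs ! m"
  by (simp add: pi_star_def Let_def nth_list_update)

lemma pi_star_list_swap:
  assumes "p \<notin> {i,j,k,l}" "q \<notin> {i,j,k,l}"
  shows "pi_star (list_swap xs p q) i j k l = list_swap (pi_star xs i j k l) p q"
proof -
  have ne: "i \<noteq> p" "j \<noteq> p" "k \<noteq> p" "l \<noteq> p" "i \<noteq> q" "j \<noteq> q" "k \<noteq> q" "l \<noteq> q"
    using assms by auto
  show ?thesis
    unfolding pi_star_def Let_def
    by (simp only: nth_list_swap_other list_swap_list_update ne
        if_distrib[where f = "\<lambda>xs. list_swap xs p q"] simp_thms)
qed

definition inv_change :: "nat list \<Rightarrow> nat \<Rightarrow> nat \<Rightarrow> nat \<Rightarrow> nat \<Rightarrow> real" where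
  "inv_change xs i j k l = real (inv_count (pi_star xs i j k l)) - real (inv_count xs)"

lemma abs_inv_change_le: "\<bar>inv_change xs i j k l\<bar> \<le> 8 * real (length xs)"
proof -
  have "\<bar>inv_change xs i j k l\<bar> \<le> 2 * card {i,j,k,l} * length xs"
    unfolding inv_change_def by (rule inv_count_diff_le) (auto simp: nth_pi_star_other)
  also have "\<dots> \<le> real (2 * 4 * length xs)"
    by (intro of_nat_mono mult_right_mono mult_left_mono) (auto simp: card_insert_if)
  finally show ?thesis by simp
qed

lemma abs_inv_change_list_swap_diff_le:
  assumes "p < length xs" "q < length xs" "p \<notin> {i,j,k,l}" "q \<notin> {i,j,k,l}"
  shows "\<bar>inv_change (list_swap xs p q) i j k l - inv_change xs i j k l\<bar> \<le> 72"
proof -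
  let ?ys = "pi_star xs i j k l"
  have "\<bar>inv_change (list_swap xs p q) i j k l - inv_change xs i j k l\<bar>
     = \<bar>(real (inv_count (list_swap ?ys p q)) - real (inv_count ?ys))
        - (real (inv_count (list_swap xs p q)) - real (inv_count xs))\<bar>"
    unfolding inv_change_def using assms by (simp add: pi_star_list_swap)
  also have "\<dots> \<le> 2 * (card {i,j,k,l} + 2)^2"
    by (rule inv_count_swap_diff_diff_le) (use assms in \<open>auto simp: nth_pi_star_other\<close>)
  also have "\<dots> \<le> real (2 * (4 + 2)^2)"
    by (intro of_nat_mono mult_left_mono power_mono add_right_mono) (auto simp: card_insert_if)
  finally show ?thesis by simp
qed

definition colour_mset :: "nat \<Rightarrow> (nat \<Rightarrow> nat) \<Rightarrow> nat multiset" where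
  "colour_mset h cnt = (\<Sum>a\<in>{1..h}. replicate_mset (cnt a) a)"

lemma count_colour_mset: "count (colour_mset h cnt) a = (if a \<in> {1..h} then cnt a else 0)"
  unfolding colour_mset_def count_sum by (simp add: sum.delta)

lemma msperms_eq_permutations_of_multiset:
  "msperms h cnt = permutations_of_multiset (colour_mset h cnt)"
proof (intro set_eqI iffI)
  fix xs assume xs: "xs \<in> msperms h cnt"
  have "count (mset xs) a = count (colour_mset h cnt) a" for a
  proof (cases "a \<in> {1..h}")
    case False
    then have "a \<notin> set xs" using xs by (auto simp: msperms_def)
    then show ?thesis using False by (auto simp: count_colour_mset count_mset count_list_0_iff)
  qed (use xs in \<open>simp add: msperms_def count_mset count_colour_mset\<close>)
  then show "xs \<in> permutations_of_multiset (colour_mset h cnt)"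
    by (simp add: permutations_of_multiset_def multiset_eq_iff)
next
  fix xs assume "xs \<in> permutations_of_multiset (colour_mset h cnt)"
  then have count_xs: "count_list xs a = (if a \<in> {1..h} then cnt a else 0)" for a
    by (simp add: permutations_of_multiset_def count_colour_mset flip: count_mset)
  have set_xs: "set xs \<subseteq> {1..h}"
  proof
    fix a assume "a \<in> set xs"
    then have "count_list xs a \<noteq> 0" by (simp add: count_list_0_iff)
    then show "a \<in> {1..h}" using count_xs[of a] by (auto split: if_splits)
  qed
  have "length xs = (\<Sum>a=1..h. cnt a)"
    using sum_count_set[OF set_xs] count_xs by simp
  then show "xs \<in> msperms h cnt" using set_xs count_xs by (simp add: msperms_def)
qed

lemma length_msperms: "xs \<in> msperms h cnt \<Longrightarrow> length xs = (\<Sum>a=1..h. cnt a)"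
  by (simp add: msperms_def)

lemma size_colour_mset: "size (colour_mset h cnt) = (\<Sum>a=1..h. cnt a)"
proof -
  obtain xs where "xs \<in> msperms h cnt"
    using msperms_eq_permutations_of_multiset permutations_of_multiset_not_empty by blast
  then show ?thesis
    by (metis length_finite_permutations_of_multiset length_msperms msperms_eq_permutations_of_multiset)
qed

lemma list_swap_in_msperms:
  "xs \<in> msperms h cnt \<Longrightarrow> p < length xs \<Longrightarrow> q < length xs \<Longrightarrow> list_swap xs p q \<in> msperms h cnt"
  by (simp add: msperms_eq_permutations_of_multiset list_swap_in_permutations_of_multiset)

definition colour_pairs :: "nat \<Rightarrow> (nat \<times> nat) set" where
  "colour_pairs h = {(a,b). 1 \<le> b \<and> b < a \<and> a \<le> h}"

lemma finite_colour_pairs [simp]: "finite (colour_pairs h)"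
  by (rule finite_subset[of _ "{..h} \<times> {..h}"]) (auto simp: colour_pairs_def)

definition cross_pairs :: "nat \<Rightarrow> (nat \<Rightarrow> nat) \<Rightarrow> real" where
  "cross_pairs h cnt = (\<Sum>(a,b)\<in>colour_pairs h. real (cnt a * cnt b))"

lemma square_sum_eq_sum_squares_plus_cross_pairs:
  "(\<Sum>a=1..h. real (cnt a))^2 = (\<Sum>a=1..h. real (cnt a)^2) + 2 * cross_pairs h cnt"
proof (induction h)
  case 0
  have "colour_pairs 0 = {}" by (auto simp: colour_pairs_def)
  then show ?case by (simp add: cross_pairs_def)
next
  case (Suc h)
  have "colour_pairs (Suc h) = colour_pairs h \<union> Pair (Suc h) ` {1..h}"
    by (auto simp: colour_pairs_def)
  moreover have "colour_pairs h \<inter> Pair (Suc h) ` {1..h} = {}"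
    by (auto simp: colour_pairs_def)
  ultimately have "cross_pairs (Suc h) cnt = cross_pairs h cnt + (\<Sum>b=1..h. real (cnt (Suc h) * cnt b))"
    unfolding cross_pairs_def by (simp add: sum.union_disjoint sum.reindex inj_on_def)
  then show ?case using Suc
    by (simp add: power2_eq_square algebra_simps sum_distrib_left sum_distrib_right)
qed

lemma cross_pairs_le: "2 * cross_pairs h cnt \<le> (\<Sum>a=1..h. real (cnt a))^2"
  using square_sum_eq_sum_squares_plus_cross_pairs[of cnt h] sum_nonneg[of "{1..h}" "\<lambda>a. real (cnt a)^2"]
  by simp

lemma cross_pairs_pos:
  assumes "2 \<le> h" and "\<forall>a\<in>{1..h}. 0 < cnt a"
  shows "cross_pairs h cnt > 0"
proof -
  have "(2, 1) \<in> colour_pairs h" using assms(1) by (auto simp: colour_pairs_def)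
  then have "real (cnt 2 * cnt 1) \<le> cross_pairs h cnt"
    unfolding cross_pairs_def
    using member_le_sum[of "(2,1)" "colour_pairs h" "\<lambda>(a,b). real (cnt a * cnt b)"] by auto
  moreover have "real (cnt 2 * cnt 1) > 0" using assms by auto
  ultimately show ?thesis by linarith
qed

definition desc_position_pairs :: "nat list \<Rightarrow> (nat \<times> nat) set" where
  "desc_position_pairs xs = {(k,l). k < length xs \<and> l < length xs \<and> xs!l < xs!k}"

lemma desc_position_pairs_subset: "desc_position_pairs xs \<subseteq> {..<length xs} \<times> {..<length xs}"
  by (auto simp: desc_position_pairs_def)

lemma finite_desc_position_pairs [simp]: "finite (desc_position_pairs xs)"
  using finite_subset[OF desc_position_pairs_subset] by blast

lemma sum_colour_pairs_eq_sum_desc_position_pairs: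
  fixes g :: "nat \<Rightarrow> nat \<Rightarrow> real"
  assumes xs: "xs \<in> msperms h cnt"
  shows "(\<Sum>(a,b)\<in>colour_pairs h. \<Sum>k\<in>positions xs a. \<Sum>l\<in>positions xs b. g k l)
        = (\<Sum>(k,l)\<in>desc_position_pairs xs. g k l)"
proof -
  let ?colours = "\<lambda>(k,l). (xs!k, xs!l)"
  have "?colours ` desc_position_pairs xs \<subseteq> colour_pairs h"
    using xs by (force simp: desc_position_pairs_def colour_pairs_def msperms_def dest: nth_mem)
  then have "(\<Sum>(k,l)\<in>desc_position_pairs xs. g k l)
      = (\<Sum>ab\<in>colour_pairs h. \<Sum>t\<in>{t \<in> desc_position_pairs xs. ?colours t = ab}. case t of (k,l) \<Rightarrow> g k l)"
    using sum.group[of "desc_position_pairs xs" "colour_pairs h" ?colours "\<lambda>(k,l). g k l"] by simp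
  also have "\<dots> = (\<Sum>(a,b)\<in>colour_pairs h.
      \<Sum>(k,l)\<in>positions xs a \<times> positions xs b. g k l)"
  proof (intro sum.cong refl)
    fix ab assume "ab \<in> colour_pairs h"
    then obtain a b where "ab = (a, b)" "b < a" by (auto simp: colour_pairs_def)
    moreover have "{t \<in> desc_position_pairs xs. ?colours t = (a, b)}
        = positions xs a \<times> positions xs b"
      using \<open>b < a\<close> by (auto simp: desc_position_pairs_def positions_def)
    ultimately show "(\<Sum>t\<in>{t \<in> desc_position_pairs xs. ?colours t = ab}. case t of (k,l) \<Rightarrow> g k l)
        = (case ab of (a, b) \<Rightarrow> \<Sum>(k,l)\<in>positions xs a \<times> positions xs b. g k l)"
      by simp
  qed
  finally show ?thesis by (simp add: sum.cartesian_product)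
qed

lemma card_desc_position_pairs:
  assumes "xs \<in> msperms h cnt"
  shows "real (card (desc_position_pairs xs)) = cross_pairs h cnt"
proof -
  have card_colour: "card (positions xs a) = cnt a" if "a \<in> {1..h}" for a
    using assms that by (simp add: card_positions msperms_def)
  have "real (card (desc_position_pairs xs)) = (\<Sum>(k,l)\<in>desc_position_pairs xs. 1::real)" by simp
  also have "\<dots> = cross_pairs h cnt"
    unfolding sum_colour_pairs_eq_sum_desc_position_pairs[OF assms, symmetric] cross_pairs_def
    by (intro sum.cong refl) (auto simp: colour_pairs_def card_colour)
  finally show ?thesis .
qed

text \<open>Choosing \<open>J = (a, b)\<close> with probability proportional to \<open>n\<^sub>a n\<^sub>b\<close> and then
  \<open>i\<^sup>*, j\<^sup>*\<close> uniformly among the positions of \<open>a\<close> and \<open>b\<close> is the same as choosing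
  \<open>(i\<^sup>*, j\<^sup>*)\<close> uniformly among the positions carrying a larger and a smaller colour.\<close>
lemma sum_colour_pairs_weighted_eq:
  fixes g :: "nat \<Rightarrow> nat \<Rightarrow> real"
  assumes pos: "\<forall>a\<in>{1..h}. 0 < cnt a" and xs: "xs \<in> msperms h cnt"
  shows "(\<Sum>(a,b)\<in>colour_pairs h. real (cnt a * cnt b) / S *
            (\<Sum>k\<in>positions xs a. \<Sum>l\<in>positions xs b. 1 / real (cnt a * cnt b) * g k l))
         = (\<Sum>(k,l)\<in>desc_position_pairs xs. g k l) / S"
proof -
  have "(\<Sum>(a,b)\<in>colour_pairs h. real (cnt a * cnt b) / S *
          (\<Sum>k\<in>positions xs a. \<Sum>l\<in>positions xs b. 1 / real (cnt a * cnt b) * g k l))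
      = (\<Sum>(a,b)\<in>colour_pairs h. (\<Sum>k\<in>positions xs a. \<Sum>l\<in>positions xs b. g k l) / S)"
  proof (intro sum.cong refl)
    fix ab assume "ab \<in> colour_pairs h"
    then obtain a b where ab: "ab = (a, b)" "real (cnt a * cnt b) \<noteq> 0"
      using pos by (auto simp: colour_pairs_def)
    have "(\<Sum>k\<in>positions xs a. \<Sum>l\<in>positions xs b. 1 / real (cnt a * cnt b) * g k l)
        = 1 / real (cnt a * cnt b) * (\<Sum>k\<in>positions xs a. \<Sum>l\<in>positions xs b. g k l)"
      by (simp only: sum_distrib_left)
    then show "(case ab of (a,b) \<Rightarrow> real (cnt a * cnt b) / S *
          (\<Sum>k\<in>positions xs a. \<Sum>l\<in>positions xs b. 1 / real (cnt a * cnt b) * g k l))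
        = (case ab of (a,b) \<Rightarrow> (\<Sum>k\<in>positions xs a. \<Sum>l\<in>positions xs b. g k l) / S)"
      using ab by simp
  qed
  also have "\<dots> = (\<Sum>(a,b)\<in>colour_pairs h. \<Sum>k\<in>positions xs a. \<Sum>l\<in>positions xs b. g k l) / S"
    by (simp add: sum_divide_distrib case_prod_unfold)
  finally show ?thesis
    by (simp only: sum_colour_pairs_eq_sum_desc_position_pairs[OF xs])
qed

definition drift_term :: "nat list \<Rightarrow> nat \<times> nat \<Rightarrow> nat \<times> nat \<Rightarrow> real" where
  "drift_term xs ij kl =
     (if xs ! snd ij < xs ! fst ij then 0 else inv_change xs (fst ij) (snd ij) (fst kl) (snd kl))"

definition drift_sum :: "nat list \<Rightarrow> real" where
  "drift_sum xs = (\<Sum>t\<in>index_pairs (length xs) \<times> desc_position_pairs xs. drift_term xs (fst t) (snd t))"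

lemma cond_drift_eq_drift_sum:
  assumes pos: "\<forall>a\<in>{1..h}. 0 < cnt a" and xs: "xs \<in> msperms h cnt"
  shows "cond_drift h cnt xs
    = drift_sum xs / (real (card (index_pairs (length xs))) * cross_pairs h cnt)"
proof -
  let ?N = "real (card (index_pairs (length xs)))"
  let ?S = "cross_pairs h cnt"
  have "cond_drift h cnt xs = (\<Sum>(i,j)\<in>index_pairs (length xs). 1 / ?N * (if xs!i > xs!j then 0 else
        (\<Sum>(a,b)\<in>colour_pairs h. real (cnt a * cnt b) / ?S *
          (\<Sum>k\<in>positions xs a. \<Sum>l\<in>positions xs b. 1 / real (cnt a * cnt b) * inv_change xs i j k l))))"
    unfolding cond_drift_def Let_def index_pairs_def colour_pairs_def cross_pairs_def inv_change_def
      positions_def ..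
  also have "\<dots> = (\<Sum>ij\<in>index_pairs (length xs). (\<Sum>kl\<in>desc_position_pairs xs. drift_term xs ij kl) / (?N * ?S))"
    unfolding sum_colour_pairs_weighted_eq[OF pos xs]
    by (intro sum.cong refl) (auto simp: drift_term_def sum_divide_distrib case_prod_unfold mult.commute)
  also have "\<dots> = drift_sum xs / (?N * ?S)"
    by (simp add: drift_sum_def sum_divide_distrib sum.cartesian_product case_prod_beta)
  finally show ?thesis .
qed

lemma abs_sum_diff_le_split:
  fixes f g :: "'a \<Rightarrow> real" and c d :: real
  assumes "finite A" and "finite B" and "A \<inter> G = B \<inter> G"
    and "\<And>x. x \<in> A \<inter> G \<Longrightarrow> \<bar>g x - f x\<bar> \<le> c"
    and "\<And>x. x \<in> A \<Longrightarrow> \<bar>f x\<bar> \<le> d" and "\<And>x. x \<in> B \<Longrightarrow> \<bar>g x\<bar> \<le> d"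
  shows "\<bar>sum g B - sum f A\<bar> \<le> real (card (A \<inter> G)) * c + (real (card (A - G)) + real (card (B - G))) * d"
proof -
  have "sum g B - sum f A = (\<Sum>x\<in>A \<inter> G. g x - f x) + sum g (B - G) - sum f (A - G)"
    using sum.Int_Diff[OF assms(1), of f G] sum.Int_Diff[OF assms(2), of g G] assms(3)
    by (simp add: sum_subtractf)
  moreover have "\<bar>\<Sum>x\<in>A \<inter> G. g x - f x\<bar> \<le> card (A \<inter> G) * c"
    using assms(4) by (rule abs_sum_le_card_mult)
  moreover have "\<bar>sum g (B - G)\<bar> \<le> card (B - G) * d" "\<bar>sum f (A - G)\<bar> \<le> card (A - G) * d"
    using assms(5,6) by (auto intro!: abs_sum_le_card_mult)
  ultimately show ?thesis by (simp add: algebra_simps)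
qed

lemma card_product_meeting_le:
  assumes "X \<subseteq> {..<n} \<times> {..<n}" and "Y \<subseteq> {..<n} \<times> {..<n}"
  shows "card (X \<times> Y - {((i,j),(k,l)). {i,j,k,l} \<inter> {p,q} = {}}) \<le> 4 * n * (card Y + card X)"
proof -
  let ?M = "{(s,t). s \<in> {p,q} \<or> t \<in> {p,q}}"
  have fin: "finite X" "finite Y" using assms finite_subset by blast+
  have "card (X \<times> Y - {((i,j),(k,l)). {i,j,k,l} \<inter> {p,q} = {}}) \<le> card ((X \<inter> ?M) \<times> Y \<union> X \<times> (Y \<inter> ?M))"
    using fin by (intro card_mono) auto
  also have "\<dots> \<le> card ((X \<inter> ?M) \<times> Y) + card (X \<times> (Y \<inter> ?M))"
    by (rule card_Un_le)
  also have "\<dots> = card (X \<inter> ?M) * card Y + card X * card (Y \<inter> ?M)"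
    by (simp only: card_cartesian_product)
  also have "\<dots> \<le> (4 * n) * card Y + card X * (4 * n)"
  proof -
    have "card (Z \<inter> ?M) \<le> 4 * n" if "Z \<subseteq> {..<n} \<times> {..<n}" for Z
      using card_pairs_meeting_le[OF that, of "{p,q}"] card_insert_le[of "{q}" p]
      by (simp add: card_insert_if split: if_splits)
    then show ?thesis using assms by (intro add_mono mult_mono) auto
  qed
  finally show ?thesis by (simp add: algebra_simps)
qed

lemma abs_drift_sum_list_swap_diff_le:
  assumes xs: "xs \<in> msperms h cnt" and p: "p < length xs" and q: "q < length xs"
  defines "N \<equiv> real (card (index_pairs (length xs)))" and "S \<equiv> cross_pairs h cnt"
  shows "\<bar>drift_sum (list_swap xs p q) - drift_sum xs\<bar>
          \<le> 72 * N * S + 64 * real (length xs)^2 * (N + S)"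
proof -
  let ?n = "length xs"
  let ?xs' = "list_swap xs p q"
  let ?U = "\<lambda>ys. index_pairs ?n \<times> desc_position_pairs ys"
  let ?term = "\<lambda>ys t. drift_term ys (fst t) (snd t)"
  define G where "G = {((i,j),(k,l)). {i,j,k,l} \<inter> {p,q} = {}}"
  have xs': "?xs' \<in> msperms h cnt" using list_swap_in_msperms[OF xs p q] .
  have card_U: "real (card (?U ys)) = N * S" if "ys \<in> msperms h cnt" for ys
    using card_desc_position_pairs[OF that] by (simp add: N_def S_def card_cartesian_product)
  have card_U_G: "real (card (?U ys - G)) \<le> 4 * real ?n * (S + N)"
    if ys: "ys \<in> msperms h cnt" "length ys = ?n" for ys
  proof -
    have "card (?U ys - G) \<le> 4 * ?n * (card (desc_position_pairs ys) + card (index_pairs ?n))"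
      unfolding G_def using ys(2) desc_position_pairs_subset[of ys]
      by (intro card_product_meeting_le index_pairs_subset) simp
    then have "real (card (?U ys - G)) \<le> 4 * real ?n * (real (card (desc_position_pairs ys)) + N)"
      unfolding N_def by (metis of_nat_add of_nat_le_iff of_nat_mult of_nat_numeral)
    then show ?thesis using card_desc_position_pairs[OF ys(1)] by (simp add: S_def)
  qed
  have "\<bar>drift_sum ?xs' - drift_sum xs\<bar>
      \<le> real (card (?U xs \<inter> G)) * 72
         + (real (card (?U xs - G)) + real (card (?U ?xs' - G))) * (8 * real ?n)"
    unfolding drift_sum_def length_list_swap
  proof (rule abs_sum_diff_le_split)
    show "?U xs \<inter> G = ?U ?xs' \<inter> G"
      by (auto simp: G_def desc_position_pairs_def nth_list_swap_other)
    fix t assume "t \<in> ?U xs \<inter> G"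
    then obtain i j k l where t: "t = ((i,j),(k,l))" "p \<notin> {i,j,k,l}" "q \<notin> {i,j,k,l}"
      by (auto simp: G_def)
    then have "?xs' ! i = xs ! i" "?xs' ! j = xs ! j" by (auto intro!: nth_list_swap_other)
    then show "\<bar>?term ?xs' t - ?term xs t\<bar> \<le> 72"
      using abs_inv_change_list_swap_diff_le[OF p q t(2,3)] t(1) by (simp add: drift_term_def)
  qed (auto simp: drift_term_def abs_inv_change_le abs_inv_change_le[of ?xs', simplified])
  also have "\<dots> \<le> (N * S) * 72 + (4 * real ?n * (S + N) + 4 * real ?n * (S + N)) * (8 * real ?n)"
  proof -
    have "card (?U xs \<inter> G) \<le> card (?U xs)" by (intro card_mono) auto
    then have "real (card (?U xs \<inter> G)) \<le> N * S" using card_U[OF xs] by linarith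
    moreover have "(real (card (?U xs - G)) + real (card (?U ?xs' - G))) * (8 * real ?n)
        \<le> (4 * real ?n * (S + N) + 4 * real ?n * (S + N)) * (8 * real ?n)"
      using card_U_G[OF xs] card_U_G[OF xs'] by (intro mult_right_mono add_mono) auto
    ultimately show ?thesis by linarith
  qed
  also have "\<dots> = 72 * N * S + 64 * real ?n^2 * (N + S)"
    by (simp add: power2_eq_square algebra_simps)
  finally show ?thesis .
qed

lemma abs_cond_drift_list_swap_diff_le:
  assumes pos: "\<forall>a\<in>{1..h}. 0 < cnt a" and S_pos: "cross_pairs h cnt > 0"
    and xs: "xs \<in> msperms h cnt" and n2: "2 \<le> length xs"
    and p: "p < length xs" and q: "q < length xs"
  shows "\<bar>cond_drift h cnt (list_swap xs p q) - cond_drift h cnt xs\<bar>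
          \<le> 256 * real (length xs)^2 / cross_pairs h cnt"
proof -
  let ?n = "real (length xs)"
  let ?N = "real (card (index_pairs (length xs)))"
  let ?S = "cross_pairs h cnt"
  have N_ge: "?n^2 \<le> 4 * ?N"
  proof -
    have "2 * ?N = ?n * (?n - 1)"
      using card_index_pairs[of "length xs"] n2
      by (metis of_nat_1 of_nat_diff of_nat_mult of_nat_numeral le_trans one_le_numeral)
    moreover have "2 * ?n \<le> ?n * ?n" using n2 by (intro mult_right_mono) auto
    ultimately show ?thesis unfolding power2_eq_square right_diff_distrib by linarith
  qed
  have S_le: "2 * ?S \<le> ?n^2"
    using cross_pairs_le[of h cnt] length_msperms[OF xs] by simp
  have "0 < ?n^2" using n2 by (intro zero_less_power) linarith
  then have N_pos: "?N > 0" using N_ge by linarith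
  have arith: "72 * N * S + 64 * m * (N + S) \<le> 256 * m * N"
    if "2 * S \<le> m" "m \<le> 4 * N" "0 < S" for N S m :: real
  proof -
    have "0 \<le> m" "0 \<le> N" "S \<le> 2 * N" using that by linarith+
    then have "72 * (N * S) \<le> 36 * (m * N)" "64 * (m * S) \<le> 128 * (m * N)" "0 \<le> m * N"
      using mult_left_mono[OF that(1), of "36 * N"] mult_left_mono[of S "2 * N" "64 * m"]
      by (simp_all add: algebra_simps)
    then have "72 * (N * S) + 64 * (m * N) + 64 * (m * S) \<le> 256 * (m * N)" by linarith
    then show ?thesis by (simp add: algebra_simps)
  qed
  have "cond_drift h cnt (list_swap xs p q) - cond_drift h cnt xs
      = (drift_sum (list_swap xs p q) - drift_sum xs) / (?N * ?S)"
    using cond_drift_eq_drift_sum[OF pos xs] cond_drift_eq_drift_sum[OF pos list_swap_in_msperms[OF xs p q]]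
    by (simp add: diff_divide_distrib)
  then have "\<bar>cond_drift h cnt (list_swap xs p q) - cond_drift h cnt xs\<bar>
      = \<bar>drift_sum (list_swap xs p q) - drift_sum xs\<bar> / (?N * ?S)"
    using N_pos S_pos by (simp add: abs_divide)
  also have "\<dots> \<le> (72 * ?N * ?S + 64 * ?n^2 * (?N + ?S)) / (?N * ?S)"
    by (rule divide_right_mono[OF abs_drift_sum_list_swap_diff_le[OF xs p q]]) (use N_pos S_pos in simp)
  also have "\<dots> \<le> 256 * ?n^2 * ?N / (?N * ?S)"
    by (rule divide_right_mono[OF arith[OF S_le N_ge S_pos]]) (use N_pos S_pos in simp)
  also have "\<dots> = 256 * ?n^2 / ?S" using N_pos by (simp add: card_gt_0_iff)
  finally show ?thesis .
qed

lemma var_perm_eq_avg: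
  "var_perm h cnt f = avg (\<lambda>xs. (f xs - avg f (msperms h cnt))^2) (msperms h cnt)"
  by (simp add: var_perm_def expect_perm_def avg_def)

theorem lemma2p11:
  shows "\<exists>C::real. \<forall>(h::nat) (cnt::nat \<Rightarrow> nat).
     2 \<le> h \<and> (\<forall>a\<in>{1..h}. 0 < cnt a) \<and> 4 \<le> (\<Sum>a=1..h. cnt a) \<longrightarrow>
     var_perm h cnt (cond_drift h cnt) \<le>
       C * real (\<Sum>a=1..h. cnt a) ^ 5 /
         (real (\<Sum>a=1..h. cnt a) ^ 2 - (\<Sum>a=1..h. real (cnt a) ^ 2)) ^ 2"
proof (intro exI allI impI)
  fix h :: nat and cnt :: "nat \<Rightarrow> nat"
  assume "2 \<le> h \<and> (\<forall>a\<in>{1..h}. 0 < cnt a) \<and> 4 \<le> (\<Sum>a=1..h. cnt a)"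
  then have h: "2 \<le> h" and pos: "\<forall>a\<in>{1..h}. 0 < cnt a" and n4: "4 \<le> (\<Sum>a=1..h. cnt a)"
    by auto
  define n where "n = (\<Sum>a=1..h. cnt a)"
  define S where "S = cross_pairs h cnt"
  have S_pos: "S > 0" unfolding S_def using h pos by (rule cross_pairs_pos)
  have denom: "real n ^ 2 - (\<Sum>a=1..h. real (cnt a) ^ 2) = 2 * S"
    using square_sum_eq_sum_squares_plus_cross_pairs[of cnt h] by (simp add: n_def S_def)
  let ?M = "colour_mset h cnt"
  have lipschitz: "\<bar>cond_drift h cnt (list_swap xs p q) - cond_drift h cnt xs\<bar> \<le> 256 * real n ^ 2 / S"
    if "xs \<in> permutations_of_multiset ?M" "p < size ?M" "q < size ?M" for xs p q
    using abs_cond_drift_list_swap_diff_le[OF pos, of xs p q] that S_pos n4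
    by (simp add: S_def n_def size_colour_mset length_msperms flip: msperms_eq_permutations_of_multiset)
  from avg_power2_diff_avg_le_permutations_of_multiset[where M = ?M, OF lipschitz]
  have "var_perm h cnt (cond_drift h cnt) \<le> real n * (256 * real n ^ 2 / S)^2"
    by (simp add: var_perm_eq_avg msperms_eq_permutations_of_multiset size_colour_mset n_def)
  also have "\<dots> = 262144 * real n ^ 5 / (2 * S)^2"
    by (simp add: field_simps eval_nat_numeral)
  finally show "var_perm h cnt (cond_drift h cnt) \<le> 262144 * real (\<Sum>a=1..h. cnt a) ^ 5 /
      (real (\<Sum>a=1..h. cnt a) ^ 2 - (\<Sum>a=1..h. real (cnt a) ^ 2)) ^ 2"
    by (simp only: denom flip: n_def)
qed

end
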